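(* Let $(F_n)_{n\geq0}$ be the Fibonacci sequence and $\Phi=\frac{1+\sqrt5}{2}$ the golden ratio. Then for every positive integer $n$, \[\Phi^{\frac{n^2}{4}-\frac{9}{4}}\leq \mathrm{lcm}(F_1,F_2,\dots,F_n)\leq \Phi^{\frac{n^2}{3}+\frac{4n}{3}}.\]
   Context: The Fibonacci sequence is defined by $F_0=0$, $F_1=1$, $F_{n+2}=F_{n+1}+F_n$ for $n\geq0$. $\mathrm{lcm}$ denotes the least common positive multiple. *)

theory Defs
  imports Complex_Main "HOL-Number_Theory.Fib"
begin

definition golden_ratio :: real where
  "golden_ratio = (1 + sqrt 5) / 2"

end

theory Submission
  imports Defs "HOL-Computational_Algebra.Primes"
begin

(* Write L n = lcm (F 1) ... (F n), and use strong divisibility gcd (F a) (F b) = F (gcd a b).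

   Lower bound: with d = n - n div 2 and m = n div 2, every prime power divides at most one more
   of F (d+1), ..., F (d+m) than of F 1, ..., F m, so F (d+1) ... F (d+m) divides
   L n * F 1 ... F m.  Binet's formula F (d+i) = phi^d F i + psi^i F d, with psi = 1 - phi = -1/phi,
   gives F (d+i) >= phi^d F i for even i and the same for the product of F (d+i) F (d+i+1),
   whence L n >= phi^(d m - 1).

   Upper bound: L N = L (N-1) F N / gcd (F N) (L (N-1)), and the gcd is a multiple of F (N/2) or
   F (N/3) when these are integers, and of lcm (F (N/2)) (F (N/3)) = F (N/2) F (N/3) / F (N/6) when
   6 divides N.  Averaged over N mod 6 the exponent of phi grows by 2N/3 per step, which sums to
   n^2/3. *)

section \<open>Binet bounds for Fibonacci numbers\<close>

lemma golden_ratio_gt_1: "golden_ratio > 1"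
proof -
  have "sqrt 5 > 1" by simp
  then show ?thesis unfolding golden_ratio_def by simp
qed

lemma golden_ratio_square: "golden_ratio\<^sup>2 = golden_ratio + 1"
  unfolding golden_ratio_def by (simp add: power2_eq_square field_simps)

lemma golden_ratio_power_Suc_Suc:
  "golden_ratio ^ Suc (Suc n) = golden_ratio ^ Suc n + golden_ratio ^ n"
proof -
  have "golden_ratio ^ Suc (Suc n) = golden_ratio\<^sup>2 * golden_ratio ^ n"
    by (simp add: power2_eq_square)
  then show ?thesis by (simp add: golden_ratio_square distrib_right)
qed

definition golden_conj :: real where
  "golden_conj = 1 - golden_ratio"

lemma golden_conj_mult_golden_ratio: "golden_conj * golden_ratio = -1"
  using golden_ratio_square unfolding golden_conj_def by (simp add: power2_eq_square algebra_simps)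

lemma abs_golden_conj_less_1: "\<bar>golden_conj\<bar> < 1"
proof -
  have "sqrt 5 < 3" by (rule real_less_lsqrt) auto
  moreover have "sqrt 5 > 1" by simp
  ultimately show ?thesis unfolding golden_conj_def golden_ratio_def by simp
qed

lemma fib_add_binet:
  "real (fib (d + i)) = golden_ratio ^ d * real (fib i) + golden_conj ^ i * real (fib d)"
proof -
  have binet: "real (fib k) = (golden_ratio ^ k - golden_conj ^ k) / sqrt 5" for k
    using fib_closed_form[of k] unfolding golden_conj_def golden_ratio_def
    by (simp add: field_simps)
  show ?thesis unfolding binet by (simp add: field_simps power_add)
qed

lemma fib_mult_golden_ratio_le: "real (fib n) * golden_ratio \<le> golden_ratio ^ n"
proof (induction n rule: fib.induct)
  case (3 n)
  have "real (fib (Suc (Suc n))) * golden_ratio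
      = real (fib (Suc n)) * golden_ratio + real (fib n) * golden_ratio"
    by (simp add: distrib_right)
  also have "\<dots> \<le> golden_ratio ^ Suc n + golden_ratio ^ n"
    by (intro add_mono "3.IH")
  finally show ?case by (simp only: golden_ratio_power_Suc_Suc)
qed simp_all

lemma golden_ratio_power_le_fib:
  "golden_ratio ^ Suc n \<le> golden_ratio\<^sup>2 * real (fib (Suc n))"
proof (induction n rule: fib.induct)
  case 1
  show ?case using golden_ratio_gt_1 by (simp add: power2_eq_square)
next
  case (3 n)
  have "golden_ratio ^ Suc (Suc (Suc n)) = golden_ratio ^ Suc (Suc n) + golden_ratio ^ Suc n"
    by (rule golden_ratio_power_Suc_Suc)
  also have "\<dots> \<le> golden_ratio\<^sup>2 * real (fib (Suc (Suc n))) + golden_ratio\<^sup>2 * real (fib (Suc n))"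
    by (intro add_mono "3.IH")
  finally show ?case by (simp only: fib.simps of_nat_add distrib_left)
qed (simp add: power2_eq_square)

lemma fib_le_golden_ratio_powr:
  assumes "n \<ge> 1"
  shows "real (fib n) \<le> golden_ratio powr (real n - 1)"
proof -
  have "golden_ratio powr (real n - 1) = golden_ratio ^ n / golden_ratio"
    using golden_ratio_gt_1 by (simp add: powr_diff powr_realpow)
  then show ?thesis
    using fib_mult_golden_ratio_le[of n] golden_ratio_gt_1 by (simp add: le_divide_eq)
qed

lemma golden_ratio_powr_le_fib:
  assumes "n \<ge> 1"
  shows "golden_ratio powr (real n - 2) \<le> real (fib n)"
proof -
  obtain k where n: "n = Suc k" using assms by (cases n) auto
  have "golden_ratio powr (real n - 2) = golden_ratio ^ n / golden_ratio\<^sup>2"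
    using golden_ratio_gt_1 by (simp add: powr_diff powr_realpow)
  then show ?thesis
    using golden_ratio_power_le_fib[of k] golden_ratio_gt_1 unfolding n
    by (simp add: divide_le_eq mult.commute)
qed

section \<open>Divisibility in windows\<close>

lemma card_window_le:
  fixes d m :: nat
  assumes diff: "\<And>a b. P a \<Longrightarrow> P b \<Longrightarrow> b < a \<Longrightarrow> P (a - b)"
  shows "card {j \<in> {d+1..d+m}. P j} \<le> of_bool (\<exists>j \<in> {d+1..d+m}. P j) + card {i \<in> {1..m}. P i}"
proof (cases "\<exists>j \<in> {d+1..d+m}. P j")
  case False
  then have "{j \<in> {d+1..d+m}. P j} = {}" by blast
  then show ?thesis by (simp only: card.empty zero_le)
next
  case True
  define S where "S = {j \<in> {d+1..d+m}. P j}"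
  have "finite S" by (rule finite_subset[of _ "{d+1..d+m}"]) (auto simp: S_def)
  have "S \<noteq> {}" unfolding S_def using True by blast
  define j0 where "j0 = Min S"
  have j0: "j0 \<in> S" "\<And>j. j \<in> S \<Longrightarrow> j0 \<le> j"
    unfolding j0_def using \<open>finite S\<close> \<open>S \<noteq> {}\<close> by auto
  \<comment> \<open>Subtracting the least element maps the rest of \<open>S\<close> into \<open>{1..m}\<close>.\<close>
  have "inj_on (\<lambda>j. j - j0) (S - {j0})"
    using j0 by (intro inj_on_diff_nat) auto
  moreover have "(\<lambda>j. j - j0) ` (S - {j0}) \<subseteq> {i \<in> {1..m}. P i}"
  proof
    fix i assume "i \<in> (\<lambda>j. j - j0) ` (S - {j0})"
    then obtain j where j: "j \<in> S" "j \<noteq> j0" "i = j - j0" by auto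
    then have "j0 < j" using j0(2) by (simp add: order.not_eq_order_implies_strict)
    moreover have "P j" "P j0" "j \<le> d + m" "d + 1 \<le> j0" using j(1) j0(1) unfolding S_def by auto
    ultimately have "P (j - j0)" "1 \<le> j - j0" "j - j0 \<le> m" using diff by simp_all
    then show "i \<in> {i \<in> {1..m}. P i}" using j(3) by simp
  qed
  ultimately have "card (S - {j0}) \<le> card {i \<in> {1..m}. P i}"
    by (intro card_inj_on_le) auto
  moreover have "card S = Suc (card (S - {j0}))"
    using \<open>finite S\<close> j0(1) by (rule card.remove)
  ultimately have "card S \<le> 1 + card {i \<in> {1..m}. P i}" by simp
  then show ?thesis using True unfolding S_def by simp
qed

lemma card_prime_power_dvd:
  fixes p x :: "'a :: factorial_semiring"
  assumes "x \<noteq> 0" "\<not> is_unit p"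
  shows "card {e \<in> {1..N}. p ^ e dvd x} = min N (multiplicity p x)"
proof -
  have "p ^ e dvd x \<longleftrightarrow> e \<le> multiplicity p x" for e
    by (rule power_dvd_iff_le_multiplicity[OF assms])
  then have "{e \<in> {1..N}. p ^ e dvd x} = {e \<in> {1..N}. e \<le> multiplicity p x}"
    by (simp only:)
  also have "\<dots> = {1..min N (multiplicity p x)}" by auto
  finally have "{e \<in> {1..N}. p ^ e dvd x} = {1..min N (multiplicity p x)}" .
  then show ?thesis by simp
qed

lemma sum_card_filter_swap:
  assumes "finite A" "finite B"
  shows "(\<Sum>a\<in>A. card {b \<in> B. R a b}) = (\<Sum>b\<in>B. card {a \<in> A. R a b})"
proof -
  have "card {b \<in> B. R a b} = (\<Sum>b\<in>B. of_bool (R a b))" for a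
    using assms(2) by (simp add: Int_def)
  moreover have "card {a \<in> A. R a b} = (\<Sum>a\<in>A. of_bool (R a b))" for b
    using assms(1) by (simp add: Int_def)
  ultimately show ?thesis by (simp add: sum.swap[of _ A B])
qed

lemma prod_dvd_by_prime_power_count:
  fixes x :: "'a \<Rightarrow> nat" and y :: "'b \<Rightarrow> nat"
  assumes fin: "finite A" "finite B"
    and nz: "0 \<notin> x ` A" "0 \<notin> y ` B" "z \<noteq> 0"
    and count: "\<And>p k. prime p \<Longrightarrow> k > 0 \<Longrightarrow>
      card {a \<in> A. p ^ k dvd x a} \<le> of_bool (p ^ k dvd z) + card {b \<in> B. p ^ k dvd y b}"
  shows "prod x A dvd z * prod y B"
proof (rule multiplicity_le_imp_dvd)
  show "prod x A \<noteq> 0" using fin(1) nz(1) by (auto simp: prod_zero_iff image_iff)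
  fix p :: nat
  assume p: "prime p"
  define N where "N = multiplicity p (prod x A)"
  have count_eq: "card {e \<in> {1..N}. p ^ e dvd w} = min N (multiplicity p w)" if "w \<noteq> 0" for w
    using that p by (intro card_prime_power_dvd) auto
  \<comment> \<open>Count pairs \<open>(e, a)\<close> with \<open>p ^ e\<close> dividing \<open>x a\<close> in both orders.\<close>
  have "multiplicity p (prod x A) = (\<Sum>a\<in>A. multiplicity p (x a))"
    using p fin nz by (intro prime_elem_multiplicity_prod_distrib) auto
  also have "\<dots> = (\<Sum>a\<in>A. card {e \<in> {1..N}. p ^ e dvd x a})"
  proof (rule sum.cong[OF refl])
    fix a assume "a \<in> A"
    then have "x a \<noteq> 0" "x a dvd prod x A" using nz(1) fin(1) by (auto intro: dvd_prodI)
    then have "multiplicity p (x a) \<le> N"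
      unfolding N_def using \<open>prod x A \<noteq> 0\<close> by (intro dvd_imp_multiplicity_le)
    then show "multiplicity p (x a) = card {e \<in> {1..N}. p ^ e dvd x a}"
      using count_eq[OF \<open>x a \<noteq> 0\<close>] by simp
  qed
  also have "\<dots> = (\<Sum>e\<in>{1..N}. card {a \<in> A. p ^ e dvd x a})"
    using fin(1) by (intro sum_card_filter_swap) auto
  also have "\<dots> \<le> (\<Sum>e\<in>{1..N}. of_bool (p ^ e dvd z) + card {b \<in> B. p ^ e dvd y b})"
    using p by (intro sum_mono count) auto
  also have "\<dots> = card {e \<in> {1..N}. p ^ e dvd z} + (\<Sum>b\<in>B. card {e \<in> {1..N}. p ^ e dvd y b})"
    using fin(2) by (simp add: sum.distrib sum_card_filter_swap Int_def)
  also have "\<dots> \<le> multiplicity p z + (\<Sum>b\<in>B. multiplicity p (y b))"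
  proof (intro add_mono sum_mono)
    show "card {e \<in> {1..N}. p ^ e dvd z} \<le> multiplicity p z"
      unfolding count_eq[OF nz(3)] by (rule min.cobounded2)
    fix b assume "b \<in> B"
    then have "y b \<noteq> 0" using nz(2) by force
    show "card {e \<in> {1..N}. p ^ e dvd y b} \<le> multiplicity p (y b)"
      unfolding count_eq[OF \<open>y b \<noteq> 0\<close>] by (rule min.cobounded2)
  qed
  also have "\<dots> = multiplicity p (z * prod y B)"
  proof -
    have "prod y B \<noteq> 0" using fin(2) nz(2) by (auto simp: prod_zero_iff image_iff)
    then show ?thesis
      using p fin nz by (simp add: prime_elem_multiplicity_mult_distrib prime_elem_multiplicity_prod_distrib)
  qed
  finally show "multiplicity p (prod x A) \<le> multiplicity p (z * prod y B)" .
qed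

lemma fib_dvd_fib: "m dvd n \<Longrightarrow> fib m dvd fib n"
  by (metis fib_gcd gcd_nat.absorb1 dvd_refl gcd_dvd2)

lemma dvd_fib_diff:
  assumes "q dvd fib a" "q dvd fib b" "b \<le> a"
  shows "q dvd fib (a - b)"
proof -
  have "q dvd gcd (fib b) (fib a)" using assms by simp
  also have "gcd (fib b) (fib a) = gcd (fib b) (fib (a - b))"
    by (rule gcd_fib_diff[OF assms(3), symmetric])
  finally show ?thesis using dvd_trans gcd_dvd2 by blast
qed

abbreviation Lcm_fib :: "nat \<Rightarrow> nat" where
  "Lcm_fib n \<equiv> Lcm (fib ` {1..n})"

lemma Lcm_fib_pos: "Lcm_fib n > 0"
proof -
  have "0 \<notin> fib ` {1..n}" using fib_neq_0_nat by (auto simp: image_iff)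
  then show ?thesis by (intro gr0I) (simp add: Lcm_0_iff_nat)
qed

lemma fib_dvd_Lcm_fib: "1 \<le> j \<Longrightarrow> j \<le> n \<Longrightarrow> fib j dvd Lcm_fib n"
  by (rule dvd_Lcm) auto

lemma prod_fib_window_dvd:
  assumes "d + m \<le> n"
  shows "(\<Prod>j\<in>{d+1..d+m}. fib j) dvd Lcm_fib n * (\<Prod>i\<in>{1..m}. fib i)"
proof (rule prod_dvd_by_prime_power_count)
  fix p k :: nat
  have "card {j \<in> {d+1..d+m}. p ^ k dvd fib j}
      \<le> of_bool (\<exists>j \<in> {d+1..d+m}. p ^ k dvd fib j) + card {i \<in> {1..m}. p ^ k dvd fib i}"
    by (rule card_window_le) (simp add: dvd_fib_diff)
  moreover have "of_bool (\<exists>j \<in> {d+1..d+m}. p ^ k dvd fib j) \<le> (of_bool (p ^ k dvd Lcm_fib n) :: nat)"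
    using assms by (auto intro: dvd_trans fib_dvd_Lcm_fib)
  ultimately show "card {j \<in> {d+1..d+m}. p ^ k dvd fib j}
      \<le> of_bool (p ^ k dvd Lcm_fib n) + card {i \<in> {1..m}. p ^ k dvd fib i}"
    by linarith
qed (use Lcm_fib_pos fib_neq_0_nat in \<open>auto simp: image_iff\<close>)

section \<open>The lower bound\<close>

lemma fib_add_ge_even:
  assumes "even i"
  shows "golden_ratio ^ d * real (fib i) \<le> real (fib (d + i))"
  using assms by (simp add: fib_add_binet zero_le_even_power)

lemma fib_add_pair_ge:
  assumes "even i"
  shows "golden_ratio ^ (2 * d) * (real (fib i) * real (fib (Suc i)))
           \<le> real (fib (d + i)) * real (fib (d + Suc i))"
proof -
  define u a f b c where "u = golden_ratio ^ d" and "a = golden_conj ^ i" and "f = real (fib d)"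
    and "b = real (fib i)" and "c = real (fib (Suc i))"
  have "a = \<bar>golden_conj\<bar> ^ i"
    unfolding a_def using assms by (simp add: power_even_abs)
  then have a: "0 \<le> a" "a \<le> 1"
    using abs_golden_conj_less_1 by (simp_all add: power_le_one)
  have f: "0 \<le> f" "f * golden_ratio \<le> u"
    unfolding f_def u_def by (simp_all add: fib_mult_golden_ratio_le)
  have "b \<le> c" "1 \<le> c"
    unfolding b_def c_def using fib_Suc_mono[of i] fib_neq_0_nat[of "Suc i"] by simp_all
  \<comment> \<open>Since \<open>golden_conj * golden_ratio = -1\<close>, the cross term below times \<open>golden_ratio\<close>
    is \<open>u * (golden_ratio * c - b) - a * f\<close>.\<close>
  have key: "a * f \<le> u * (golden_ratio * c - b)"
  proof -
    have "u * (golden_ratio * c - b) \<ge> u * ((golden_ratio - 1) * c)"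
      using \<open>b \<le> c\<close> golden_ratio_gt_1 by (intro mult_left_mono) (simp_all add: u_def algebra_simps)
    moreover have "u * ((golden_ratio - 1) * c) \<ge> u * (golden_ratio - 1)"
      using \<open>1 \<le> c\<close> golden_ratio_gt_1 by (simp add: u_def)
    moreover have "u * (golden_ratio - 1) * golden_ratio = u * (golden_ratio\<^sup>2 - golden_ratio)"
      by (simp add: power2_eq_square algebra_simps)
    then have "u * (golden_ratio - 1) * golden_ratio = u"
      by (simp add: golden_ratio_square)
    then have "f * golden_ratio \<le> u * (golden_ratio - 1) * golden_ratio"
      using f(2) by (simp only:)
    then have "f \<le> u * (golden_ratio - 1)"
      using golden_ratio_gt_1 by simp
    moreover have "a * f \<le> f" using a f by (simp add: mult_left_le_one_le)
    ultimately show ?thesis by linarith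
  qed
  have "golden_ratio * (u * (c + golden_conj * b) + golden_conj * a * f)
      = u * (golden_ratio * c) + (golden_conj * golden_ratio) * (u * b + a * f)"
    by (simp add: algebra_simps)
  also have "\<dots> = u * (golden_ratio * c - b) - a * f"
    unfolding golden_conj_mult_golden_ratio by (simp add: algebra_simps)
  finally have "0 \<le> golden_ratio * (u * (c + golden_conj * b) + golden_conj * a * f)"
    using key by simp
  then have cross: "0 \<le> u * (c + golden_conj * b) + golden_conj * a * f"
    using golden_ratio_gt_1 by (simp add: zero_le_mult_iff)
  have "real (fib (d + i)) * real (fib (d + Suc i))
      = (u * b + a * f) * (u * c + golden_conj * a * f)"
    unfolding fib_add_binet u_def a_def f_def b_def c_def by simp
  also have "\<dots> = u\<^sup>2 * (b * c) + (a * f) * (u * (c + golden_conj * b) + golden_conj * a * f)"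
    by (simp add: algebra_simps power2_eq_square)
  also have "\<dots> \<ge> u\<^sup>2 * (b * c)"
    using a f cross by simp
  finally show ?thesis
    by (simp add: u_def b_def c_def power_mult mult.commute)
qed

lemma prod_fib_shift_ge_odd:
  "golden_ratio ^ (d * Suc (2 * k)) * (\<Prod>i=1..Suc (2 * k). real (fib i))
     \<le> golden_ratio * (\<Prod>i=1..Suc (2 * k). real (fib (d + i)))"
proof (induction k)
  case 0
  have "golden_ratio * golden_ratio ^ d \<le> golden_ratio * (golden_ratio * real (fib (Suc d)))"
    using golden_ratio_power_le_fib[of d] by (simp add: power2_eq_square mult.assoc)
  then show ?case using golden_ratio_gt_1 by simp
next
  case (Suc k)
  have split: "(\<Prod>i=1..Suc (2 * Suc k). g i) = (\<Prod>i=1..Suc (2 * k). g i) * (g (2 * k + 2) * g (Suc (2 * k + 2)))"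
    for g :: "nat \<Rightarrow> real"
    by (simp add: prod.nat_ivl_Suc')
  have "golden_ratio ^ (d * Suc (2 * Suc k)) * (\<Prod>i=1..Suc (2 * Suc k). real (fib i))
      = (golden_ratio ^ (d * Suc (2 * k)) * (\<Prod>i=1..Suc (2 * k). real (fib i)))
        * (golden_ratio ^ (2 * d) * (real (fib (2 * k + 2)) * real (fib (Suc (2 * k + 2)))))"
  proof -
    have "d * Suc (2 * Suc k) = d * Suc (2 * k) + 2 * d" by simp
    then show ?thesis unfolding split by (simp only: power_add mult_ac)
  qed
  also have "\<dots> \<le> (golden_ratio * (\<Prod>i=1..Suc (2 * k). real (fib (d + i))))
        * (real (fib (d + (2 * k + 2))) * real (fib (d + Suc (2 * k + 2))))"
    by (rule mult_mono[OF Suc.IH fib_add_pair_ge])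
      (use golden_ratio_gt_1 in \<open>auto intro!: mult_nonneg_nonneg prod_nonneg\<close>)
  also have "\<dots> = golden_ratio * (\<Prod>i=1..Suc (2 * Suc k). real (fib (d + i)))"
    unfolding split by (simp only: mult_ac)
  finally show ?case .
qed

lemma prod_fib_shift_ge:
  "golden_ratio ^ (d * m) * (\<Prod>i=1..m. real (fib i)) \<le> golden_ratio * (\<Prod>i=1..m. real (fib (d + i)))"
proof (cases "odd m")
  case True
  then obtain k where "m = Suc (2 * k)" by (metis oddE Suc_eq_plus1)
  then show ?thesis using prod_fib_shift_ge_odd by simp
next
  case False
  show ?thesis
  proof (cases "m = 0")
    case True
    then show ?thesis using golden_ratio_gt_1 by simp
  next
    case m: False
    obtain k where m_eq: "m = Suc (Suc (2 * k))"
    proof -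
      from False obtain j where "m = 2 * j" by (auto elim: evenE)
      with m that show ?thesis by (cases j) auto
    qed
    have "golden_ratio ^ (d * m) * (\<Prod>i=1..m. real (fib i))
        = (golden_ratio ^ (d * Suc (2 * k)) * (\<Prod>i=1..Suc (2 * k). real (fib i)))
          * (golden_ratio ^ d * real (fib m))"
    proof -
      have "d * m = d * Suc (2 * k) + d" unfolding m_eq by simp
      then show ?thesis
        unfolding m_eq by (simp only: prod.nat_ivl_Suc' power_add mult_ac)
    qed
    also have "\<dots> \<le> (golden_ratio * (\<Prod>i=1..Suc (2 * k). real (fib (d + i)))) * real (fib (d + m))"
      by (rule mult_mono[OF prod_fib_shift_ge_odd fib_add_ge_even])
        (use golden_ratio_gt_1 False in \<open>auto intro!: mult_nonneg_nonneg prod_nonneg\<close>)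
    also have "\<dots> = golden_ratio * (\<Prod>i=1..m. real (fib (d + i)))"
      unfolding m_eq by (simp only: prod.nat_ivl_Suc' mult_ac)
    finally show ?thesis .
  qed
qed

lemma Lcm_fib_lower:
  "golden_ratio powr ((real n)\<^sup>2 / 4 - 5 / 4) \<le> real (Lcm_fib n)"
proof -
  define m d where "m = n div 2" and "d = n - n div 2"
  define P Q where "P = (\<Prod>i=1..m. real (fib (d + i)))" and "Q = (\<Prod>i=1..m. real (fib i))"
  have "Q > 0" unfolding Q_def using fib_neq_0_nat by (intro prod_pos) auto
  have "(\<Prod>j\<in>{d+1..d+m}. fib j) dvd Lcm_fib n * (\<Prod>i\<in>{1..m}. fib i)"
    by (rule prod_fib_window_dvd) (simp add: m_def d_def)
  moreover have "(\<Prod>j\<in>{d+1..d+m}. fib j) = (\<Prod>i\<in>{1..m}. fib (d + i))"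
    using prod.shift_bounds_cl_nat_ivl[of fib 1 d m] by (simp add: add.commute)
  ultimately have "(\<Prod>i\<in>{1..m}. fib (d + i)) \<le> Lcm_fib n * (\<Prod>i\<in>{1..m}. fib i)"
    using Lcm_fib_pos fib_neq_0_nat by (intro dvd_imp_le) (auto intro: prod_pos)
  then have "P \<le> real (Lcm_fib n) * Q"
    unfolding P_def Q_def by (metis of_nat_le_iff of_nat_mult of_nat_prod)
  have "golden_ratio ^ (d * m) * Q \<le> golden_ratio * P"
    unfolding P_def Q_def by (rule prod_fib_shift_ge)
  also have "\<dots> \<le> golden_ratio * (real (Lcm_fib n) * Q)"
    using \<open>P \<le> real (Lcm_fib n) * Q\<close> golden_ratio_gt_1 by simp
  finally have "golden_ratio ^ (d * m) * Q \<le> (golden_ratio * real (Lcm_fib n)) * Q"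
    by (simp only: mult.assoc)
  then have bound: "golden_ratio ^ (d * m) / golden_ratio \<le> real (Lcm_fib n)"
    using \<open>Q > 0\<close> golden_ratio_gt_1 by (simp add: divide_le_eq mult.commute)
  have "(real n)\<^sup>2 / 4 - 5 / 4 \<le> real (d * m) - 1"
    unfolding m_def d_def by (cases "even n") (auto elim!: evenE oddE simp: power2_eq_square algebra_simps)
  then have "golden_ratio powr ((real n)\<^sup>2 / 4 - 5 / 4) \<le> golden_ratio powr (real (d * m) - 1)"
    using golden_ratio_gt_1 by (intro powr_mono) auto
  also have "\<dots> = golden_ratio ^ (d * m) / golden_ratio"
    using golden_ratio_gt_1 by (simp only: powr_diff powr_realpow powr_one)
  finally show ?thesis using bound by linarith
qed

section \<open>The upper bound\<close>

lemma Lcm_fib_Suc: "Lcm_fib (Suc n) = lcm (fib (Suc n)) (Lcm_fib n)"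
proof -
  have "{1..Suc n} = insert (Suc n) {1..n}" by auto
  then show ?thesis by simp
qed

lemma Lcm_fib_Suc_mult_gcd:
  "Lcm_fib (Suc n) * gcd (fib (Suc n)) (Lcm_fib n) = fib (Suc n) * Lcm_fib n"
  unfolding Lcm_fib_Suc by (simp only: lcm_mult_gcd normalize_nat_def id_apply)

lemma lcm_fib_ge:
  assumes "1 \<le> a" "1 \<le> b"
  shows "golden_ratio powr (real a + real b - real (gcd a b) - 3) \<le> real (lcm (fib a) (fib b))"
proof -
  have "gcd a b \<ge> 1" using assms by (simp add: Suc_le_eq)
  have eq: "real (fib a) * real (fib b) = real (lcm (fib a) (fib b)) * real (fib (gcd a b))"
    by (simp only: fib_gcd lcm_mult_gcd normalize_nat_def id_apply of_nat_mult[symmetric])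
  have "golden_ratio powr (real a + real b - 4)
      = golden_ratio powr (real a - 2) * golden_ratio powr (real b - 2)"
    using powr_add[of golden_ratio "real a - 2" "real b - 2"] by simp
  also have "\<dots> \<le> real (fib a) * real (fib b)"
    using assms by (intro mult_mono golden_ratio_powr_le_fib) auto
  also have "\<dots> \<le> real (lcm (fib a) (fib b)) * golden_ratio powr (real (gcd a b) - 1)"
    unfolding eq using \<open>gcd a b \<ge> 1\<close> by (intro mult_left_mono fib_le_golden_ratio_powr) auto
  finally have "golden_ratio powr (real a + real b - 4) / golden_ratio powr (real (gcd a b) - 1)
      \<le> real (lcm (fib a) (fib b))"
    by (simp add: divide_le_eq)
  moreover have "golden_ratio powr (real a + real b - 4) / golden_ratio powr (real (gcd a b) - 1)
      = golden_ratio powr (real a + real b - real (gcd a b) - 3)"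
    by (simp add: powr_diff[symmetric] algebra_simps)
  ultimately show ?thesis by simp
qed

lemma mod_6_cases:
  fixes n :: nat
  obtains "n mod 6 = 0" | "n mod 6 = 1" | "n mod 6 = 2" | "n mod 6 = 3" | "n mod 6 = 4" | "n mod 6 = 5"
proof -
  have "n mod 6 < 6" by simp
  then show ?thesis using that by linarith
qed

definition gcd_exponent :: "nat \<Rightarrow> real" where
  "gcd_exponent n =
    (if n mod 6 = 0 then 2 * real n / 3 - 3
     else if n mod 6 \<in> {2, 4} then real n / 2 - 2
     else if n mod 6 = 3 then real n / 3 - 2
     else 0)"

lemma gcd_fib_Lcm_fib_ge:
  "golden_ratio powr gcd_exponent (Suc n) \<le> real (gcd (fib (Suc n)) (Lcm_fib n))"
proof -
  define G where "G = gcd (fib (Suc n)) (Lcm_fib n)"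
  have "G > 0" unfolding G_def using fib_neq_0_nat[of "Suc n"] by simp
  have dvd_G: "g dvd G" if "g dvd fib (Suc n)" "g dvd Lcm_fib n" for g
    unfolding G_def using that by simp
  have divisor: "golden_ratio powr (real k - 2) \<le> real G"
    if "Suc n = c * k" "2 \<le> c" "1 \<le> k" for c k
  proof -
    have "2 * k \<le> c * k" using that(2) by simp
    then have "k \<le> n" using that(1,3) by linarith
    moreover have "k dvd Suc n" unfolding that(1) by simp
    ultimately have "fib k dvd G" using that(3) by (intro dvd_G fib_dvd_fib fib_dvd_Lcm_fib)
    then have "fib k \<le> G" using \<open>G > 0\<close> by (rule dvd_imp_le)
    then show ?thesis using golden_ratio_powr_le_fib[OF \<open>1 \<le> k\<close>] by linarith
  qed
  define t where "t = Suc n div 6"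
  have N: "Suc n = 6 * t + Suc n mod 6" unfolding t_def by simp
  then have real_N: "real (Suc n) = 6 * real t + real (Suc n mod 6)"
    by (metis of_nat_add of_nat_mult of_nat_numeral)
  have "golden_ratio powr gcd_exponent (Suc n) \<le> real G"
  proof (cases "Suc n" rule: mod_6_cases)
    case 1
    then have n: "Suc n = 6 * t" "1 \<le> t" using N by simp_all
    have "lcm (fib (3 * t)) (fib (2 * t)) dvd G"
      using n by (intro dvd_G lcm_least fib_dvd_fib fib_dvd_Lcm_fib) auto
    then have "lcm (fib (3 * t)) (fib (2 * t)) \<le> G" using \<open>G > 0\<close> by (rule dvd_imp_le)
    moreover have "gcd (3 * t) (2 * t) = t"
      using gcd_mult_distrib_nat[of t 3 2] by (simp add: mult.commute)
    then have "golden_ratio powr (4 * real t - 3) \<le> real (lcm (fib (3 * t)) (fib (2 * t)))"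
      using lcm_fib_ge[of "3 * t" "2 * t"] n by simp
    moreover have "gcd_exponent (Suc n) = 4 * real t - 3"
      using 1 real_N by (simp add: gcd_exponent_def field_simps)
    ultimately show ?thesis by simp
  next
    case 3
    have "gcd_exponent (Suc n) = real (3 * t + 1) - 2"
      using 3 real_N by (simp add: gcd_exponent_def field_simps)
    moreover have "golden_ratio powr (real (3 * t + 1) - 2) \<le> real G"
      by (rule divisor[of 2]) (use 3 N in simp_all)
    ultimately show ?thesis by simp
  next
    case 4
    have "gcd_exponent (Suc n) = real (2 * t + 1) - 2"
      using 4 real_N by (simp add: gcd_exponent_def field_simps)
    moreover have "golden_ratio powr (real (2 * t + 1) - 2) \<le> real G"
      by (rule divisor[of 3]) (use 4 N in simp_all)
    ultimately show ?thesis by simp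
  next
    case 5
    have "gcd_exponent (Suc n) = real (3 * t + 2) - 2"
      using 5 real_N by (simp add: gcd_exponent_def field_simps)
    moreover have "golden_ratio powr (real (3 * t + 2) - 2) \<le> real G"
      by (rule divisor[of 2]) (use 5 N in simp_all)
    ultimately show ?thesis by simp
  qed (use \<open>G > 0\<close> golden_ratio_gt_1 in \<open>simp_all add: gcd_exponent_def\<close>)
  then show ?thesis by (simp add: G_def)
qed

definition upper_exponent :: "nat \<Rightarrow> real" where
  "upper_exponent n = (real n)\<^sup>2 / 3 +
    (if n mod 6 \<in> {0, 4} then 2 * real n / 3
     else if n mod 6 \<in> {1, 5} then real n - 4 / 3
     else if n mod 6 = 2 then 5 * real n / 6 - 1
     else 5 * real n / 6 - 1 / 2)"

lemma upper_exponent_step: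
  "upper_exponent n + real n - gcd_exponent (Suc n) \<le> upper_exponent (Suc n)"
  by (cases n rule: mod_6_cases)
    (simp_all add: upper_exponent_def gcd_exponent_def mod_Suc power2_eq_square field_simps)

lemma upper_exponent_le: "upper_exponent n \<le> (real n)\<^sup>2 / 3 + 4 * real n / 3"
  by (cases n rule: mod_6_cases) (simp_all add: upper_exponent_def)

lemma Lcm_fib_upper: "real (Lcm_fib n) \<le> golden_ratio powr upper_exponent n"
proof (induction n)
  case 0
  show ?case using golden_ratio_gt_1 by (simp add: upper_exponent_def)
next
  case (Suc n)
  define G where "G = gcd (fib (Suc n)) (Lcm_fib n)"
  have "0 < G" unfolding G_def using fib_neq_0_nat[of "Suc n"] by simp
  have "real (Lcm_fib (Suc n)) = real (fib (Suc n)) * real (Lcm_fib n) / real G"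
    using Lcm_fib_Suc_mult_gcd[of n] \<open>0 < G\<close> unfolding G_def
    by (simp add: eq_divide_eq flip: of_nat_mult)
  also have "\<dots> \<le> golden_ratio powr real n * golden_ratio powr upper_exponent n
      / golden_ratio powr gcd_exponent (Suc n)"
    using fib_le_golden_ratio_powr[of "Suc n"] Suc.IH gcd_fib_Lcm_fib_ge[of n] \<open>0 < G\<close>
    unfolding G_def by (intro frac_le mult_mono) auto
  also have "\<dots> = golden_ratio powr (upper_exponent n + real n - gcd_exponent (Suc n))"
    using golden_ratio_gt_1 by (simp add: powr_add powr_diff mult.commute)
  also have "\<dots> \<le> golden_ratio powr upper_exponent (Suc n)"
    using upper_exponent_step golden_ratio_gt_1 by (intro powr_mono) auto
  finally show ?case .
qed

theorem mainTheorem7: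
  fixes n :: nat
  assumes "n \<ge> 1"
  shows "golden_ratio powr ((real n)\<^sup>2 / 4 - 9 / 4) \<le> real (Lcm (fib ` {1..n}))
       \<and> real (Lcm (fib ` {1..n})) \<le> golden_ratio powr ((real n)\<^sup>2 / 3 + 4 * real n / 3)"
proof
  \<comment> \<open>Both bounds hold for \<open>n = 0\<close> as well.\<close>
  have "golden_ratio powr ((real n)\<^sup>2 / 4 - 9 / 4) \<le> golden_ratio powr ((real n)\<^sup>2 / 4 - 5 / 4)"
    using golden_ratio_gt_1 by (intro powr_mono) auto
  also have "\<dots> \<le> real (Lcm_fib n)" by (rule Lcm_fib_lower)
  finally show "golden_ratio powr ((real n)\<^sup>2 / 4 - 9 / 4) \<le> real (Lcm_fib n)" .
next
  have "real (Lcm_fib n) \<le> golden_ratio powr upper_exponent n" by (rule Lcm_fib_upper)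
  also have "\<dots> \<le> golden_ratio powr ((real n)\<^sup>2 / 3 + 4 * real n / 3)"
    using upper_exponent_le golden_ratio_gt_1 by (intro powr_mono) auto
  finally show "real (Lcm_fib n) \<le> golden_ratio powr ((real n)\<^sup>2 / 3 + 4 * real n / 3)" .
qed

end
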